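(* Let $\mathcal{A}$ be a central, essential hyperplane arrangement in $\mathbb{R}^d$, let $\ell$ be a modular coatom of $\mathcal{A}$, and let $c$ be a chamber incident to $\ell$. Write $\mathcal{A}_\ell$ for the set of hyperplanes of $\mathcal{A}$ containing $\ell$. (i) The set of chambers $c'$ with $c'/\ell=c/\ell$ can be linearly ordered as $c_1=c,c_2,\ldots,c_t$ so that $$\varnothing=L_1(c,c_1)\subset L_1(c,c_2)\subset\cdots\subset L_1(c,c_t)=\mathcal{A}\setminus\mathcal{A}_\ell,$$ each inclusion adding exactly one hyperplane. This induces a linear order $H_1,H_2,\ldots$ on $\mathcal{A}\setminus\mathcal{A}_\ell$, listing the hyperplanes in the order in which they are added along this chain. (ii) With respect to this linear order, if $i<j<k$ and $c$ is also incident to $\ell+(H_i\cap H_k)$, then $H_i\cap H_j=H_i\cap H_k=H_j\cap H_k$.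
   Context: A central, essential arrangement is a finite set of linear hyperplanes in $\mathbb{R}^d$ with common intersection $\{0\}$. Chambers are connected components of the complement of their union; $L_1(c,c')$ is the set of hyperplanes separating chambers $c,c'$. A coatom is a line $\ell$ that is an intersection of hyperplanes of $\mathcal{A}$; it is modular if for every pair of distinct hyperplanes $H,H'\in\mathcal{A}$ not containing $\ell$, the hyperplane $\ell+(H\cap H')$ belongs to $\mathcal{A}$. For a chamber $c$, $c/\ell$ denotes the chamber of the localized arrangement $\{H/\ell: H\in\mathcal{A}, H\supseteq\ell\}$ in $\mathbb{R}^d/\ell$ containing the image of $c$. A chamber $c$ is incident to a subspace $X$ if the closure of $c$ meets $X$ in a set of the same dimension as $X$. *)

theory Defs
  imports "HOL-Analysis.Analysis"
begin

definition lin_hyperplane :: "'a::euclidean_space set \<Rightarrow> bool" where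
  "lin_hyperplane H \<longleftrightarrow> (\<exists>a. a \<noteq> 0 \<and> H = {x. a \<bullet> x = 0})"

definition central_essential_arr :: "'a::euclidean_space set set \<Rightarrow> bool" where
  "central_essential_arr A \<longleftrightarrow> finite A \<and> (\<forall>H\<in>A. lin_hyperplane H) \<and> \<Inter>A = {0}"

definition chamber :: "'a::euclidean_space set set \<Rightarrow> 'a set \<Rightarrow> bool" where
  "chamber A c \<longleftrightarrow> c \<in> components (- \<Union>A)"

definition separates :: "'a::euclidean_space set \<Rightarrow> 'a set \<Rightarrow> 'a set \<Rightarrow> bool" where
  "separates H c c' \<longleftrightarrow>
     (\<exists>a. H = {x. a \<bullet> x = 0} \<and> (\<forall>x\<in>c. a \<bullet> x < 0) \<and> (\<forall>y\<in>c'. 0 < a \<bullet> y))"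

definition L1 :: "'a::euclidean_space set set \<Rightarrow> 'a set \<Rightarrow> 'a set \<Rightarrow> 'a set set" where
  "L1 A c c' = {H \<in> A. separates H c c'}"

definition ssum :: "'a::euclidean_space set \<Rightarrow> 'a set \<Rightarrow> 'a set" where
  "ssum X Y = {x + y | x y. x \<in> X \<and> y \<in> Y}"

definition coatom :: "'a::euclidean_space set set \<Rightarrow> 'a set \<Rightarrow> bool" where
  "coatom A l \<longleftrightarrow> subspace l \<and> dim l = 1 \<and> (\<exists>B\<subseteq>A. l = \<Inter>B)"

definition modular_coatom :: "'a::euclidean_space set set \<Rightarrow> 'a set \<Rightarrow> bool" where
  "modular_coatom A l \<longleftrightarrow> coatom A l \<and>
     (\<forall>H\<in>A. \<forall>H'\<in>A. H \<noteq> H' \<longrightarrow> \<not> l \<subseteq> H \<longrightarrow> \<not> l \<subseteq> H' \<longrightarrow> ssum l (H \<inter> H') \<in> A)"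

definition loc :: "'a::euclidean_space set set \<Rightarrow> 'a set \<Rightarrow> 'a set set" where
  "loc A l = {H \<in> A. l \<subseteq> H}"

text \<open>The localized arrangement
  {H/l} in R^d/l is modelled by its preimage {H in A. l \<subseteq> H} in R^d (the
  quotient map R^d \<rightarrow> R^d/l induces a bijection between their chambers), so c/l is
  the chamber of loc A l (as an arrangement in R^d) containing c.\<close>
definition quot_chamber :: "'a::euclidean_space set set \<Rightarrow> 'a set \<Rightarrow> 'a set \<Rightarrow> 'a set" where
  "quot_chamber A l c = (THE D. D \<in> components (- \<Union>(loc A l)) \<and> c \<subseteq> D)"

definition incident :: "'a::euclidean_space set \<Rightarrow> 'a set \<Rightarrow> bool" where
  "incident c X \<longleftrightarrow> aff_dim (closure c \<inter> X) = aff_dim X"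

end

theory Submission
  imports Defs
begin

text \<open>Fix a nonzero vector \<open>v\<close> of \<open>l\<close> in the closure of \<open>c\<close> and scale the normal of every
  hyperplane \<open>H \<notin> \<A>\<^sub>l\<close> so that it takes the value 1 at \<open>v\<close>. For two such hyperplanes the
  normals agree exactly on \<open>l + (H \<inter> H')\<close>, which lies in \<open>\<A>\<^sub>l\<close> by modularity; hence on the
  chamber \<open>c/l\<close> of \<open>\<A>\<^sub>l\<close> the order of the values of these normals does not depend on the
  point. Moving from a point of \<open>c\<close> along the direction \<open>-v\<close> crosses the hyperplanes in this
  order, and every chamber over \<open>c/l\<close> is determined by the hyperplanes on whose negative side
  it lies, which always form an initial segment; this gives (i). For (ii), on the closure of
  \<open>c\<close> the value of the normal of \<open>H\<^sub>j\<close> lies between those of \<open>H\<^sub>i\<close> and \<open>H\<^sub>k\<close>, which coincide on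
  \<open>l + (H\<^sub>i \<inter> H\<^sub>k)\<close>; if \<open>c\<close> is incident to that hyperplane, the three normals are affinely
  dependent, so the three hyperplanes share their pairwise intersections.\<close>

text \<open>Only meaningful for \<open>v \<notin> H\<close>; otherwise the \<open>SOME\<close> ranges over an empty set.\<close>

definition normal_at :: "'a::euclidean_space \<Rightarrow> 'a set \<Rightarrow> 'a" where
  "normal_at v H = (SOME a. H = {x. a \<bullet> x = 0} \<and> a \<bullet> v = 1)"

lemma lin_hyperplane_normal_at:
  assumes "lin_hyperplane H" "v \<notin> H"
  shows "H = {x. normal_at v H \<bullet> x = 0}" and "normal_at v H \<bullet> v = 1"
proof -
  obtain a where a: "H = {x. a \<bullet> x = 0}"
    using assms(1) by (auto simp: lin_hyperplane_def)
  then have av: "a \<bullet> v \<noteq> 0" using assms(2) by auto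
  have "H = {x. (a /\<^sub>R (a \<bullet> v)) \<bullet> x = 0} \<and> (a /\<^sub>R (a \<bullet> v)) \<bullet> v = 1"
    using a av by auto
  then have "H = {x. normal_at v H \<bullet> x = 0} \<and> normal_at v H \<bullet> v = 1"
    unfolding normal_at_def by (rule someI)
  then show "H = {x. normal_at v H \<bullet> x = 0}" and "normal_at v H \<bullet> v = 1" by auto
qed

lemma proportional_if_kernel_subset:
  fixes u w :: "'a::real_inner"
  assumes "w \<noteq> 0" "\<And>x. w \<bullet> x = 0 \<Longrightarrow> u \<bullet> x = 0"
  shows "u = ((u \<bullet> w) / (w \<bullet> w)) *\<^sub>R w"
proof -
  define r where "r = u - ((u \<bullet> w) / (w \<bullet> w)) *\<^sub>R w"
  have "w \<bullet> r = 0" using assms(1) by (simp add: r_def inner_diff_right inner_commute)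
  then have "u \<bullet> r = 0" and "w \<bullet> r = 0" using assms(2) by auto
  then have "r \<bullet> r = 0" by (simp add: r_def inner_diff_left)
  then show ?thesis by (simp add: r_def)
qed

lemma proportional_if_squeezed_on_slice:
  fixes u w :: "'a::euclidean_space"
  assumes "w \<noteq> 0" and squeeze: "\<And>x. x \<in> S \<Longrightarrow> 0 \<le> u \<bullet> x \<and> u \<bullet> x \<le> w \<bullet> x"
    and full: "aff_dim (S \<inter> {x. w \<bullet> x = 0}) = aff_dim {x. w \<bullet> x = 0}"
  obtains \<mu> where "u = \<mu> *\<^sub>R w"
proof -
  let ?X = "{x. w \<bullet> x = 0}"
  have "0 \<in> ?X" by simp
  then have "aff_dim ?X \<noteq> -1" using aff_dim_empty[of ?X] by blast
  then have "S \<inter> ?X \<noteq> {}" using full by auto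
  moreover have "affine hull (S \<inter> ?X) \<subseteq> ?X"
    using affine_hyperplane[of w 0] by (intro hull_minimal) auto
  ultimately have "affine hull (S \<inter> ?X) = ?X"
    using full affine_hyperplane[of w 0] by (intro affine_dim_equal) auto
  moreover have "affine hull (S \<inter> ?X) \<subseteq> {x. u \<bullet> x = 0}"
    using squeeze affine_hyperplane[of u 0] by (intro hull_minimal) force+
  ultimately have "\<And>x. w \<bullet> x = 0 \<Longrightarrow> u \<bullet> x = 0" by blast
  then show ?thesis using that proportional_if_kernel_subset[OF assms(1)] by blast
qed

lemma hyperplane_intersections_eq_if_combination:
  fixes a b c :: "'a::real_inner"
  assumes "b = (1 - \<mu>) *\<^sub>R a + \<mu> *\<^sub>R c" "\<mu> \<noteq> 0" "\<mu> \<noteq> 1"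
  shows "{x. a \<bullet> x = 0} \<inter> {x. b \<bullet> x = 0} = {x. a \<bullet> x = 0} \<inter> {x. c \<bullet> x = 0}"
    and "{x. a \<bullet> x = 0} \<inter> {x. c \<bullet> x = 0} = {x. b \<bullet> x = 0} \<inter> {x. c \<bullet> x = 0}"
proof -
  have b: "b \<bullet> x = (1 - \<mu>) * (a \<bullet> x) + \<mu> * (c \<bullet> x)" for x
    using assms(1) by (simp add: inner_add_left)
  show "{x. a \<bullet> x = 0} \<inter> {x. b \<bullet> x = 0} = {x. a \<bullet> x = 0} \<inter> {x. c \<bullet> x = 0}"
    using b assms(2) by auto
  show "{x. a \<bullet> x = 0} \<inter> {x. c \<bullet> x = 0} = {x. b \<bullet> x = 0} \<inter> {x. c \<bullet> x = 0}"
    using b assms(3) by auto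
qed

lemma connected_hyperplane_side_eq:
  assumes "connected S" "\<And>z. z \<in> S \<Longrightarrow> w \<bullet> z \<noteq> 0" "x \<in> S" "y \<in> S"
  shows "w \<bullet> x < 0 \<longleftrightarrow> w \<bullet> y < 0"
proof (rule ccontr)
  assume "\<not> (w \<bullet> x < 0 \<longleftrightarrow> w \<bullet> y < 0)"
  then have "w \<bullet> x \<le> 0 \<and> 0 \<le> w \<bullet> y \<or> w \<bullet> y \<le> 0 \<and> 0 \<le> w \<bullet> x" by linarith
  then obtain z where "z \<in> S" "w \<bullet> z = 0"
    using connected_ivt_hyperplane[OF assms(1,3,4), of w 0]
      connected_ivt_hyperplane[OF assms(1,4,3), of w 0] by blast
  then show False using assms(2) by blast
qed

lemma connected_component_if_same_sides:
  assumes "\<And>H. H \<in> A \<Longrightarrow> \<exists>a. H = {x. a \<bullet> x = 0} \<and> (a \<bullet> y < 0 \<longleftrightarrow> a \<bullet> z < 0)"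
    and "y \<notin> \<Union>A" "z \<notin> \<Union>A"
  shows "connected_component (- \<Union>A) y z"
proof -
  have "closed_segment y z \<subseteq> - \<Union>A"
  proof
    fix x assume x: "x \<in> closed_segment y z"
    have "x \<notin> H" if H: "H \<in> A" for H
    proof -
      obtain a where a: "H = {x. a \<bullet> x = 0}" "a \<bullet> y < 0 \<longleftrightarrow> a \<bullet> z < 0"
        using assms(1)[OF H] by blast
      have "a \<bullet> y \<noteq> 0" "a \<bullet> z \<noteq> 0" using assms(2,3) H a(1) by auto
      then consider "a \<bullet> y < 0" "a \<bullet> z < 0" | "a \<bullet> y > 0" "a \<bullet> z > 0"
        using a(2) by linarith
      then have "a \<bullet> x \<noteq> 0"
      proof cases
        case 1
        then show ?thesis
          using closed_segment_subset[OF _ _ convex_halfspace_lt[of a 0]] x by fastforce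
      next
        case 2
        then show ?thesis
          using closed_segment_subset[OF _ _ convex_halfspace_gt[of 0 a]] x by fastforce
      qed
      then show ?thesis using a(1) by auto
    qed
    then show "x \<in> - \<Union>A" by blast
  qed
  then show ?thesis unfolding connected_component_def
    by (meson connected_segment ends_in_segment)
qed

lemma distinct_nth_in_set_take_iff:
  assumes "distinct xs" "j < length xs"
  shows "xs ! j \<in> set (take m xs) \<longleftrightarrow> j < m"
  using assms by (auto simp: in_set_conv_nth nth_eq_iff_index_eq)

lemma downward_closed_nat_initial_segment:
  fixes n :: nat
  assumes "\<And>i j. i \<le> j \<Longrightarrow> j < n \<Longrightarrow> P j \<Longrightarrow> P i"
  shows "\<exists>m\<le>n. \<forall>i<n. P i \<longleftrightarrow> i < m"
  using assms
proof (induction n)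
  case 0
  then show ?case by auto
next
  case (Suc n)
  then obtain m where m: "m \<le> n" "\<forall>i<n. P i \<longleftrightarrow> i < m" by (metis less_Suc_eq)
  show ?case
  proof (cases "P n")
    case True
    have "\<forall>i<Suc n. P i"
    proof (intro allI impI)
      fix i assume "i < Suc n"
      then show "P i" using Suc.prems[of i n] True by simp
    qed
    then show ?thesis by auto
  next
    case False
    then show ?thesis using m by (auto simp: less_Suc_eq intro!: exI[of _ m])
  qed
qed

lemma strict_sorted_separator:
  fixes xs :: "real list"
  assumes sorted: "sorted_wrt (<) xs" and "m \<le> length xs"
  obtains s where "s \<notin> set xs" "\<And>i. i < length xs \<Longrightarrow> xs ! i < s \<longleftrightarrow> i < m"
proof -
  \<comment> \<open>For \<open>xs = []\<close> the value \<open>xs ! 0\<close> is unspecified, but then nothing is required of \<open>s\<close>.\<close>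
  define s where "s = (if m = 0 then xs ! 0 - 1 else if m = length xs then xs ! (m - 1) + 1
                       else (xs ! (m - 1) + xs ! m) / 2)"
  have le: "xs ! i \<le> xs ! j" if "i \<le> j" "j < length xs" for i j
    using sorted_wrt_nth_less[OF sorted, of i j] that by (cases "i = j") auto
  have sep: "(i < m \<longrightarrow> xs ! i < s) \<and> (m \<le> i \<longrightarrow> s < xs ! i)" if i: "i < length xs" for i
  proof (cases "m = 0 \<or> m = length xs")
    case True
    moreover have "xs ! 0 \<le> xs ! i" "xs ! i \<le> xs ! (length xs - 1)"
      using le i by auto
    ultimately show ?thesis using i by (auto simp: s_def)
  next
    case False
    have gap: "xs ! (m - 1) < xs ! m" using sorted_wrt_nth_less[OF sorted] False assms(2) by simp
    have "xs ! i \<le> xs ! (m - 1)" if "i < m" using le[of i "m - 1"] that assms(2) by simp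
    moreover have "xs ! m \<le> xs ! i" if "m \<le> i" using le[of m i] that i by simp
    ultimately show ?thesis using gap False by (auto simp: s_def)
  qed
  show ?thesis
  proof
    show "s \<notin> set xs" using sep by (fastforce simp: in_set_conv_nth)
    show "xs ! i < s \<longleftrightarrow> i < m" if "i < length xs" for i
      using sep[OF that] by (meson not_le order.asym)
  qed
qed

lemma quot_chamber_eqI:
  assumes "D \<in> components (- \<Union>(loc A l))" "C \<noteq> {}" "C \<subseteq> D"
  shows "quot_chamber A l C = D"
  unfolding quot_chamber_def
proof (rule the_equality)
  fix D' assume "D' \<in> components (- \<Union>(loc A l)) \<and> C \<subseteq> D'"
  then show "D' = D" using assms components_eq by blast
qed (use assms in auto)

lemma quot_chamber_in_components:
  assumes "chamber A C"
  shows "quot_chamber A l C \<in> components (- \<Union>(loc A l))" and "C \<subseteq> quot_chamber A l C"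
proof -
  have C: "C \<in> components (- \<Union>A)" using assms by (simp add: chamber_def)
  obtain y where y: "y \<in> C" using in_components_nonempty[OF C] by auto
  have sub: "- \<Union>A \<subseteq> - \<Union>(loc A l)" by (auto simp: loc_def)
  have "y \<in> - \<Union>(loc A l)" using y in_components_subset[OF C] sub by blast
  then have D: "connected_component_set (- \<Union>(loc A l)) y \<in> components (- \<Union>(loc A l))"
    by (auto simp: components_iff)
  have "C = connected_component_set (- \<Union>A) y"
    using C y by (metis components_iff connected_component_eq)
  then have "C \<subseteq> connected_component_set (- \<Union>(loc A l)) y"
    using connected_component_mono[OF sub] by blast
  then have "quot_chamber A l C = connected_component_set (- \<Union>(loc A l)) y"
    using quot_chamber_eqI[OF D] y by blast
  then show "quot_chamber A l C \<in> components (- \<Union>(loc A l))" and "C \<subseteq> quot_chamber A l C"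
    using D \<open>C \<subseteq> _\<close> by auto
qed

lemma incident_line_obtain_nonzero:
  fixes l c :: "'a::euclidean_space set"
  assumes "subspace l" "dim l = 1" "incident c l"
  obtains v where "v \<in> l" "v \<noteq> 0" "v \<in> closure c"
proof (rule ccontr)
  assume "\<not> thesis"
  then have "closure c \<inter> l \<subseteq> {0}" using that by blast
  then have "aff_dim (closure c \<inter> l) \<le> aff_dim {0::'a}" by (rule aff_dim_subset)
  moreover have "aff_dim (closure c \<inter> l) = 1"
    using assms by (simp add: incident_def aff_dim_subspace)
  ultimately show False by simp
qed

definition L1_chain ::
    "'a::euclidean_space set set \<Rightarrow> 'a set \<Rightarrow> 'a set \<Rightarrow> 'a set list \<Rightarrow> 'a set list \<Rightarrow> bool" where
  "L1_chain A l c cs hs \<longleftrightarrow>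
     distinct cs \<and> hd cs = c \<and>
     set cs = {c'. chamber A c' \<and> quot_chamber A l c' = quot_chamber A l c} \<and>
     distinct hs \<and> length cs = length hs + 1 \<and> set hs = A - loc A l \<and>
     (\<forall>i < length cs. L1 A c (cs ! i) = set (take i hs))"

locale modular_line_arrangement =
  fixes A :: "'a::euclidean_space set set" and l c :: "'a set" and v y0 :: 'a
  assumes finite_A: "finite A"
    and hyperplanes: "\<And>H. H \<in> A \<Longrightarrow> lin_hyperplane H"
    and subspace_l: "subspace l" and dim_l: "dim l = 1"
    and modular: "\<And>H H'. \<lbrakk>H \<in> A; H' \<in> A; H \<noteq> H'; \<not> l \<subseteq> H; \<not> l \<subseteq> H'\<rbrakk>
                    \<Longrightarrow> ssum l (H \<inter> H') \<in> A"
    and chamber_c: "chamber A c"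
    and v_in_l: "v \<in> l" and v_nonzero: "v \<noteq> 0" and v_in_closure: "v \<in> closure c"
    and y0_in_c: "y0 \<in> c"
begin

abbreviation D where "D \<equiv> quot_chamber A l c"

abbreviation \<phi> where "\<phi> \<equiv> normal_at v"

definition transversal where "transversal = A - loc A l"

lemma l_eq_span: "l = span {v}"
proof -
  have "span {v} \<subseteq> l" using v_in_l subspace_l by (simp add: span_minimal)
  moreover have "dim l \<le> dim (span {v})" using dim_l v_nonzero by simp
  ultimately have "span (span {v}) = span l" by (rule dim_eq_span)
  then show ?thesis using subspace_l by (metis span_eq_iff span_span)
qed

lemma transversal_iff: "H \<in> transversal \<longleftrightarrow> H \<in> A \<and> v \<notin> H"
proof -
  have "l \<subseteq> H \<longleftrightarrow> v \<in> H" if "H \<in> A" for H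
  proof -
    have "subspace H"
      using hyperplanes[OF that] by (auto simp: lin_hyperplane_def subspace_hyperplane)
    then show ?thesis using l_eq_span span_base[of v "{v}"] span_minimal[of "{v}" H] by auto
  qed
  then show ?thesis by (auto simp: transversal_def loc_def)
qed

lemma transversal_mem_iff: "H \<in> transversal \<Longrightarrow> x \<in> H \<longleftrightarrow> \<phi> H \<bullet> x = 0"
  using lin_hyperplane_normal_at(1) hyperplanes transversal_iff by blast

lemma transversal_normal_v: "H \<in> transversal \<Longrightarrow> \<phi> H \<bullet> v = 1"
  using lin_hyperplane_normal_at(2) hyperplanes transversal_iff by blast

lemma transversal_normal_inj:
  assumes "H \<in> transversal" "H' \<in> transversal" "\<phi> H = \<phi> H'"
  shows "H = H'"
proof (rule set_eqI)
  fix x show "x \<in> H \<longleftrightarrow> x \<in> H'"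
    using transversal_mem_iff[OF assms(1), of x] transversal_mem_iff[OF assms(2), of x] assms(3)
    by simp
qed

lemma loc_normal:
  assumes "H \<in> loc A l"
  obtains a where "H = {x. a \<bullet> x = 0}" "a \<bullet> v = 0"
proof -
  obtain a where "H = {x. a \<bullet> x = 0}"
    using assms hyperplanes by (auto simp: loc_def lin_hyperplane_def)
  moreover have "v \<in> H" using assms v_in_l by (auto simp: loc_def)
  ultimately show ?thesis using that by blast
qed

lemma c_component: "c \<in> components (- \<Union>A)"
  using chamber_c by (simp add: chamber_def)

lemma D_component: "D \<in> components (- \<Union>(loc A l))"
  and c_subset_D: "c \<subseteq> D"
  using quot_chamber_in_components[OF chamber_c] by auto

lemma y0_in_D: "y0 \<in> D"
  using y0_in_c c_subset_D by blast

lemma D_eq_component: "D = connected_component_set (- \<Union>(loc A l)) y0"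
  using D_component y0_in_D by (metis components_iff connected_component_eq)

lemma D_avoids_loc: "y \<in> D \<Longrightarrow> H \<in> loc A l \<Longrightarrow> y \<notin> H"
  using in_components_subset[OF D_component] by blast

lemma normal_pos_on_c:
  assumes "y \<in> c" "H \<in> transversal"
  shows "\<phi> H \<bullet> y > 0"
proof (rule ccontr)
  have avoid: "\<phi> H \<bullet> z \<noteq> 0" if "z \<in> c" for z
    using that in_components_subset[OF c_component] assms(2) transversal_mem_iff
    by (auto simp: transversal_def)
  assume "\<not> \<phi> H \<bullet> y > 0"
  then have "\<phi> H \<bullet> y < 0" using avoid[OF assms(1)] by linarith
  then have "c \<subseteq> {x. \<phi> H \<bullet> x \<le> 0}"
    using connected_hyperplane_side_eq[OF in_components_connected[OF c_component] avoid assms(1)]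
    by fastforce
  then have "closure c \<subseteq> {x. \<phi> H \<bullet> x \<le> 0}"
    by (rule closure_minimal) (rule closed_halfspace_le)
  then show False using v_in_closure transversal_normal_v[OF assms(2)] by auto
qed

lemma ssum_transversal_eq:
  assumes "H \<in> transversal" "H' \<in> transversal"
  shows "ssum l (H \<inter> H') = {x. (\<phi> H' - \<phi> H) \<bullet> x = 0}"
proof (intro set_eqI iffI)
  fix x assume "x \<in> ssum l (H \<inter> H')"
  then obtain u w where x: "x = u + w" "u \<in> l" "w \<in> H \<inter> H'" unfolding ssum_def by blast
  moreover obtain r where "u = r *\<^sub>R v" using x(2) l_eq_span by (auto simp: span_singleton)
  ultimately show "x \<in> {x. (\<phi> H' - \<phi> H) \<bullet> x = 0}"
    using transversal_mem_iff[OF assms(1)] transversal_mem_iff[OF assms(2)]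
      transversal_normal_v[OF assms(1)] transversal_normal_v[OF assms(2)]
    by (simp add: inner_diff_left inner_add_right)
next
  fix x assume "x \<in> {x. (\<phi> H' - \<phi> H) \<bullet> x = 0}"
  then have "\<phi> H' \<bullet> x = \<phi> H \<bullet> x" by (simp add: inner_diff_left)
  then have "x - (\<phi> H \<bullet> x) *\<^sub>R v \<in> H \<inter> H'"
    using transversal_mem_iff[OF assms(1)] transversal_mem_iff[OF assms(2)]
      transversal_normal_v[OF assms(1)] transversal_normal_v[OF assms(2)]
    by (simp add: inner_diff_right)
  moreover have "(\<phi> H \<bullet> x) *\<^sub>R v \<in> l" using v_in_l subspace_l by (simp add: subspace_scale)
  ultimately show "x \<in> ssum l (H \<inter> H')" unfolding ssum_def by force
qed

lemma ssum_transversal_in_loc: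
  assumes "H \<in> transversal" "H' \<in> transversal" "H \<noteq> H'"
  shows "ssum l (H \<inter> H') \<in> loc A l"
proof -
  have "ssum l (H \<inter> H') \<in> A"
    using modular assms by (auto simp: transversal_def loc_def)
  moreover have "0 \<in> H \<inter> H'" using transversal_mem_iff assms by simp
  then have "l \<subseteq> ssum l (H \<inter> H')" unfolding ssum_def by force
  ultimately show ?thesis by (simp add: loc_def)
qed

lemma normals_differ_on_D:
  assumes "H \<in> transversal" "H' \<in> transversal" "H \<noteq> H'" "y \<in> D"
  shows "\<phi> H \<bullet> y \<noteq> \<phi> H' \<bullet> y"
  using D_avoids_loc[OF assms(4) ssum_transversal_in_loc[OF assms(1-3)]]
    ssum_transversal_eq[OF assms(1,2)] by (auto simp: inner_diff_left)

lemma normal_order_on_D: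
  assumes "H \<in> transversal" "H' \<in> transversal" "y \<in> D" "z \<in> D" "\<phi> H \<bullet> y < \<phi> H' \<bullet> y"
  shows "\<phi> H \<bullet> z < \<phi> H' \<bullet> z"
proof -
  have "H \<noteq> H'" using assms(5) by auto
  then have "(\<phi> H - \<phi> H') \<bullet> y < 0 \<longleftrightarrow> (\<phi> H - \<phi> H') \<bullet> z < 0"
    using normals_differ_on_D[OF assms(1,2)]
    by (intro connected_hyperplane_side_eq[OF in_components_connected[OF D_component] _ assms(3,4)])
       (auto simp: inner_diff_left)
  then show ?thesis using assms(5) by (simp add: inner_diff_left)
qed

lemma L1_eq_negative_side:
  assumes C: "chamber A C" "C \<subseteq> D" and y: "y \<in> C"
  shows "L1 A c C = {H \<in> transversal. \<phi> H \<bullet> y < 0}"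
proof (intro set_eqI iffI)
  have CA: "C \<subseteq> - \<Union>A" and conn_C: "connected C"
    using C(1) in_components_subset in_components_connected by (auto simp: chamber_def)
  fix H
  {
    assume "H \<in> L1 A c C"
    then obtain a where HA: "H \<in> A"
      and a: "H = {x. a \<bullet> x = 0}" "\<forall>x\<in>c. a \<bullet> x < 0" "\<forall>x\<in>C. 0 < a \<bullet> x"
      by (auto simp: L1_def separates_def)
    have "H \<notin> loc A l"
    proof
      assume "H \<in> loc A l"
      then have "a \<bullet> y0 < 0 \<longleftrightarrow> a \<bullet> y < 0"
        using D_avoids_loc a(1) y C(2) y0_in_D
        by (intro connected_hyperplane_side_eq[OF in_components_connected[OF D_component]]) auto
      then show False using a y0_in_c y by force
    qed
    then have HT: "H \<in> transversal" using HA by (simp add: transversal_def)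
    have "\<phi> H \<noteq> 0" using transversal_normal_v[OF HT] by auto
    then obtain \<mu> where \<mu>: "a = \<mu> *\<^sub>R \<phi> H"
      using proportional_if_kernel_subset[of "\<phi> H" a] transversal_mem_iff[OF HT] a(1) by blast
    have "\<mu> * (\<phi> H \<bullet> y0) < 0" using a(2) y0_in_c \<mu> by auto
    then have "\<mu> < 0" using normal_pos_on_c[OF y0_in_c HT] by (simp add: mult_less_0_iff)
    moreover have "\<mu> * (\<phi> H \<bullet> y) > 0" using a(3) y \<mu> by auto
    ultimately show "H \<in> {H \<in> transversal. \<phi> H \<bullet> y < 0}"
      using HT by (simp add: zero_less_mult_iff)
  next
    assume "H \<in> {H \<in> transversal. \<phi> H \<bullet> y < 0}"
    then have HT: "H \<in> transversal" and neg: "\<phi> H \<bullet> y < 0" by auto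
    have "\<phi> H \<bullet> z \<noteq> 0" if "z \<in> C" for z
      using that CA transversal_mem_iff[OF HT] HT by (auto simp: transversal_def)
    then have "\<forall>z\<in>C. \<phi> H \<bullet> z < 0"
      using connected_hyperplane_side_eq[OF conn_C _ y] neg by blast
    then have "separates H c C"
      unfolding separates_def using normal_pos_on_c[OF _ HT] transversal_mem_iff[OF HT]
      by (intro exI[of _ "- \<phi> H"]) auto
    then show "H \<in> L1 A c C" using HT by (simp add: L1_def transversal_def)
  }
qed

lemma chamber_eq_if_L1_eq:
  assumes C1: "chamber A C1" "C1 \<subseteq> D" and C2: "chamber A C2" "C2 \<subseteq> D"
    and L1_eq: "L1 A c C1 = L1 A c C2"
  shows "C1 = C2"
proof -
  have comps: "C1 \<in> components (- \<Union>A)" "C2 \<in> components (- \<Union>A)"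
    using C1 C2 by (auto simp: chamber_def)
  obtain y1 y2 where y: "y1 \<in> C1" "y2 \<in> C2"
    using in_components_nonempty comps by blast
  have sides: "\<exists>a. H = {x. a \<bullet> x = 0} \<and> (a \<bullet> y1 < 0 \<longleftrightarrow> a \<bullet> y2 < 0)" if H: "H \<in> A" for H
  proof (cases "H \<in> loc A l")
    case True
    then obtain a where a: "H = {x. a \<bullet> x = 0}" by (rule loc_normal)
    have "a \<bullet> y1 < 0 \<longleftrightarrow> a \<bullet> y2 < 0"
      using D_avoids_loc[OF _ True] a y C1(2) C2(2)
      by (intro connected_hyperplane_side_eq[OF in_components_connected[OF D_component]]) auto
    then show ?thesis using a by blast
  next
    case False
    then have HT: "H \<in> transversal" using H by (simp add: transversal_def)
    have "\<phi> H \<bullet> y1 < 0 \<longleftrightarrow> \<phi> H \<bullet> y2 < 0"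
      using L1_eq L1_eq_negative_side[OF C1 y(1)] L1_eq_negative_side[OF C2 y(2)] HT by blast
    then show ?thesis using transversal_mem_iff[OF HT] by blast
  qed
  have "y1 \<notin> \<Union>A" "y2 \<notin> \<Union>A" using y in_components_subset comps by blast+
  then have "connected_component (- \<Union>A) y1 y2"
    using connected_component_if_same_sides[of A y1 y2] sides by blast
  moreover have "C1 = connected_component_set (- \<Union>A) y1"
    using comps(1) y(1) by (metis components_iff connected_component_eq)
  ultimately have "y2 \<in> C1" by simp
  then show ?thesis using components_eq[OF comps] y(2) by blast
qed

lemma L1_self_empty: "L1 A c c = {}"
  using y0_in_c by (force simp: L1_def separates_def)

lemma line_in_D: "y0 + r *\<^sub>R v \<in> D"
proof -
  let ?S = "range (\<lambda>r. y0 + r *\<^sub>R v)"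
  have "connected ?S"
    by (rule connected_continuous_image) (auto intro!: continuous_intros)
  moreover have "?S \<subseteq> - \<Union>(loc A l)"
  proof
    fix x assume "x \<in> ?S"
    then obtain t where x: "x = y0 + t *\<^sub>R v" by auto
    have "x \<notin> H" if H: "H \<in> loc A l" for H
    proof -
      obtain a where a: "H = {x. a \<bullet> x = 0}" "a \<bullet> v = 0" using loc_normal[OF H] .
      have "y0 \<notin> H" using D_avoids_loc[OF y0_in_D H] .
      then show ?thesis using a x by (simp add: inner_add_right)
    qed
    then show "x \<in> - \<Union>(loc A l)" by blast
  qed
  ultimately have "?S \<subseteq> D"
    unfolding D_eq_component by (intro connected_component_maximal) auto
  then show ?thesis by auto
qed

end

lemma set_take_eq_if_nth_iff:
  assumes "m \<le> length xs" "\<And>i. i < length xs \<Longrightarrow> P (xs ! i) \<longleftrightarrow> i < m"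
  shows "{x \<in> set xs. P x} = set (take m xs)"
proof -
  have "{x \<in> set xs. P x} = (!) xs ` {0..<m}"
  proof (intro set_eqI iffI)
    fix x assume "x \<in> {x \<in> set xs. P x}"
    then obtain i where "i < length xs" "x = xs ! i" "P x" by (auto simp: in_set_conv_nth)
    then show "x \<in> (!) xs ` {0..<m}" using assms(2) by auto
  next
    fix x assume "x \<in> (!) xs ` {0..<m}"
    then obtain i where "i < m" "x = xs ! i" by auto
    then show "x \<in> {x \<in> set xs. P x}" using assms by auto
  qed
  also have "\<dots> = set (take m xs)" using assms(1) by (rule nth_image)
  finally show ?thesis .
qed

lemma distinct_set_take_inj:
  assumes "distinct xs" "m \<le> length xs" "m' \<le> length xs" "set (take m xs) = set (take m' xs)"
  shows "m = m'"
proof -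
  have "card (set (take n xs)) = n" if "n \<le> length xs" for n
    using distinct_card[OF distinct_take[OF assms(1)]] that by simp
  then show ?thesis using assms(2-4) by metis
qed

lemma L1_chainD:
  assumes "L1_chain A l c cs hs"
  shows "distinct hs" "set hs = A - loc A l" "length cs = length hs + 1"
    "set cs = {c'. chamber A c' \<and> quot_chamber A l c' = quot_chamber A l c}"
    "\<And>i. i < length cs \<Longrightarrow> L1 A c (cs ! i) = set (take i hs)"
  using assms by (auto simp: L1_chain_def)

context modular_line_arrangement
begin

lemma chamber_with_L1_prefix:
  assumes hs: "set hs = transversal" "sorted_wrt (<) (map (\<lambda>H. \<phi> H \<bullet> y0) hs)"
    and m: "m \<le> length hs"
  obtains C where "chamber A C" "C \<subseteq> D" "L1 A c C = set (take m hs)"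
proof -
  obtain s where "s \<notin> set (map (\<lambda>H. \<phi> H \<bullet> y0) hs)"
    and "\<And>i. i < length hs \<Longrightarrow> map (\<lambda>H. \<phi> H \<bullet> y0) hs ! i < s \<longleftrightarrow> i < m"
    using strict_sorted_separator[OF hs(2), of m] m by auto
  then have s: "s \<notin> (\<lambda>H. \<phi> H \<bullet> y0) ` transversal"
    "\<And>i. i < length hs \<Longrightarrow> \<phi> (hs ! i) \<bullet> y0 < s \<longleftrightarrow> i < m"
    using hs(1) by auto
  define p where "p = y0 + (- s) *\<^sub>R v"
  have normal_p: "\<phi> H \<bullet> p = \<phi> H \<bullet> y0 - s" if "H \<in> transversal" for H
    using transversal_normal_v[OF that] by (simp add: p_def inner_diff_right)
  have p_in_D: "p \<in> D" unfolding p_def by (rule line_in_D)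
  have p_notin: "p \<notin> H" if H: "H \<in> A" for H
  proof (cases "H \<in> loc A l")
    case True
    then show ?thesis using D_avoids_loc[OF p_in_D] by blast
  next
    case False
    then have "H \<in> transversal" using H by (simp add: transversal_def)
    then show ?thesis using s(1) normal_p transversal_mem_iff by force
  qed
  define C where "C = connected_component_set (- \<Union>A) p"
  have C: "chamber A C" using p_notin by (auto simp: C_def chamber_def components_iff)
  have "connected_component_set (- \<Union>(loc A l)) p = D"
    using p_in_D D_eq_component by (metis connected_component_eq)
  then have C_D: "C \<subseteq> D"
    unfolding C_def using connected_component_mono[of "- \<Union>A" "- \<Union>(loc A l)"]
    by (auto simp: loc_def)
  have "L1 A c C = {H \<in> transversal. \<phi> H \<bullet> p < 0}"
    using L1_eq_negative_side[OF C C_D] p_notin by (simp add: C_def)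
  also have "\<dots> = set (take m hs)"
    unfolding hs(1)[symmetric] using s(2) normal_p hs(1) nth_mem
    by (intro set_take_eq_if_nth_iff[OF m]) fastforce
  finally show ?thesis using that C C_D by blast
qed

lemma chamber_L1_prefix:
  assumes hs: "set hs = transversal" "sorted_wrt (<) (map (\<lambda>H. \<phi> H \<bullet> y0) hs)"
    and C: "chamber A C" "C \<subseteq> D"
  obtains m where "m \<le> length hs" "L1 A c C = set (take m hs)"
proof -
  obtain y where y: "y \<in> C" using C(1) in_components_nonempty by (auto simp: chamber_def)
  have hs_T: "hs ! i \<in> transversal" if "i < length hs" for i
    using that hs(1) nth_mem by blast
  have downward_closed: "\<phi> (hs ! i) \<bullet> y < 0"
    if ij: "i \<le> j" "j < length hs" "\<phi> (hs ! j) \<bullet> y < 0" for i j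
  proof (cases "i = j")
    case False
    then have "\<phi> (hs ! i) \<bullet> y0 < \<phi> (hs ! j) \<bullet> y0"
      using sorted_wrt_nth_less[OF hs(2), of i j] ij by simp
    then have "\<phi> (hs ! i) \<bullet> y < \<phi> (hs ! j) \<bullet> y"
      using normal_order_on_D[OF hs_T hs_T y0_in_D] ij y C(2) by auto
    then show ?thesis using ij by simp
  qed (use ij in simp)
  have "\<exists>m\<le>length hs. \<forall>i<length hs. \<phi> (hs ! i) \<bullet> y < 0 \<longleftrightarrow> i < m"
    using downward_closed by (rule downward_closed_nat_initial_segment)
  then obtain m where m: "m \<le> length hs" "\<forall>i<length hs. \<phi> (hs ! i) \<bullet> y < 0 \<longleftrightarrow> i < m"
    by blast
  have "L1 A c C = {H \<in> transversal. \<phi> H \<bullet> y < 0}" by (rule L1_eq_negative_side[OF C y])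
  also have "\<dots> = set (take m hs)"
    unfolding hs(1)[symmetric] using m by (intro set_take_eq_if_nth_iff) auto
  finally show ?thesis using that m(1) by blast
qed

lemma sorted_transversal_list:
  obtains hs where "set hs = transversal" "distinct hs"
    "sorted_wrt (<) (map (\<lambda>H. \<phi> H \<bullet> y0) hs)"
proof -
  let ?g = "\<lambda>H. \<phi> H \<bullet> y0"
  have "inj_on ?g transversal"
    using normals_differ_on_D y0_in_D by (auto intro!: inj_onI)
  then interpret insort: folding_insort_key "(\<le>)" "(<)" transversal ?g
    by unfold_locales
  have "finite transversal" using finite_A by (simp add: transversal_def)
  then obtain hs where hs: "sorted_wrt (<) (map ?g hs)" "set hs = transversal"
    and "length hs = card transversal"
    by (rule insort.finite_set_strict_sorted[OF subset_refl])
  moreover have "distinct hs"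
    using hs(1) strict_sorted_iff distinct_map by blast
  ultimately show ?thesis using that by blast
qed

lemma L1_chain_exists: "\<exists>cs hs. L1_chain A l c cs hs"
proof -
  obtain hs where hs: "set hs = transversal" "distinct hs"
    "sorted_wrt (<) (map (\<lambda>H. \<phi> H \<bullet> y0) hs)"
    by (rule sorted_transversal_list)
  define F where "F m = (SOME C. chamber A C \<and> C \<subseteq> D \<and> L1 A c C = set (take m hs))" for m
  have F: "chamber A (F m) \<and> F m \<subseteq> D \<and> L1 A c (F m) = set (take m hs)"
    if "m \<le> length hs" for m
    unfolding F_def by (rule someI_ex, rule chamber_with_L1_prefix[OF hs(1,3) that]) blast
  define cs where "cs = map F [0..<Suc (length hs)]"
  have "inj_on F {0..<Suc (length hs)}"
  proof (rule inj_onI)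
    fix m m' assume "m \<in> {0..<Suc (length hs)}" "m' \<in> {0..<Suc (length hs)}" "F m = F m'"
    then have m: "m \<le> length hs" "m' \<le> length hs" by auto
    then have "set (take m hs) = set (take m' hs)" using F[OF m(1)] F[OF m(2)] \<open>F m = F m'\<close> by simp
    then show "m = m'" by (rule distinct_set_take_inj[OF hs(2) m])
  qed
  then have "distinct cs" by (simp add: cs_def distinct_map del: upt_Suc)
  moreover have "hd cs = c"
    using chamber_eq_if_L1_eq[OF _ _ chamber_c c_subset_D] F[of 0] L1_self_empty
    by (simp add: cs_def hd_map del: upt_Suc)
  moreover have "set cs = {c'. chamber A c' \<and> quot_chamber A l c' = D}"
  proof (intro set_eqI iffI)
    fix C assume "C \<in> set cs"
    then obtain m where "m < Suc (length hs)" "C = F m" unfolding cs_def by (auto simp del: upt_Suc)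
    then have "chamber A C" "C \<subseteq> D" using F by (auto simp: less_Suc_eq_le)
    moreover have "quot_chamber A l C = D"
      using calculation by (intro quot_chamber_eqI[OF D_component])
        (auto simp: chamber_def dest: in_components_nonempty)
    ultimately show "C \<in> {c'. chamber A c' \<and> quot_chamber A l c' = D}" by simp
  next
    fix C assume "C \<in> {c'. chamber A c' \<and> quot_chamber A l c' = D}"
    then have C: "chamber A C" "C \<subseteq> D" using quot_chamber_in_components(2)[of A C l] by auto
    then obtain m where m: "m \<le> length hs" "L1 A c C = set (take m hs)"
      using chamber_L1_prefix[OF hs(1,3)] by blast
    then have "C = F m" using chamber_eq_if_L1_eq[OF C] F by metis
    then show "C \<in> set cs" using m(1) by (auto simp: cs_def simp del: upt_Suc)
  qed
  moreover have "\<forall>i < length cs. L1 A c (cs ! i) = set (take i hs)"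
    using F by (auto simp: cs_def less_Suc_eq_le simp del: upt_Suc)
  ultimately show ?thesis
    using hs(1,2) unfolding L1_chain_def transversal_def
    by (intro exI[of _ cs] exI[of _ hs]) (auto simp: cs_def)
qed

lemma L1_chain_normal_order:
  assumes chain: "L1_chain A l c cs hs" and ij: "i < j" "j < length hs" and y: "y \<in> D"
  shows "\<phi> (hs ! i) \<bullet> y < \<phi> (hs ! j) \<bullet> y"
proof -
  note chain = L1_chainD[OF chain]
  have j: "j < length cs" using chain(3) ij by simp
  then have "cs ! j \<in> set cs" by simp
  then have "chamber A (cs ! j)" "quot_chamber A l (cs ! j) = D" using chain(4) by auto
  then have C: "chamber A (cs ! j)" "cs ! j \<subseteq> D"
    using quot_chamber_in_components(2)[of A "cs ! j" l] by auto
  obtain y' where y': "y' \<in> cs ! j" using C(1) in_components_nonempty by (auto simp: chamber_def)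
  have T: "hs ! i \<in> transversal" "hs ! j \<in> transversal"
    using chain(2) ij nth_mem by (auto simp: transversal_def)
  have "set (take j hs) = {H \<in> transversal. \<phi> H \<bullet> y' < 0}"
    using chain(5)[OF j] L1_eq_negative_side[OF C y'] by simp
  moreover have "hs ! i \<in> set (take j hs)" "hs ! j \<notin> set (take j hs)"
    using distinct_nth_in_set_take_iff[OF chain(1)] ij by auto
  ultimately have "\<phi> (hs ! i) \<bullet> y' < \<phi> (hs ! j) \<bullet> y'" using T by auto
  then show ?thesis using normal_order_on_D[OF T] y' C(2) y by blast
qed

lemma L1_chain_intersections_eq:
  assumes chain: "L1_chain A l c cs hs" and ijk: "i < j" "j < k" "k < length hs"
    and incident: "incident c (ssum l (hs ! i \<inter> hs ! k))"
  shows "hs ! i \<inter> hs ! j = hs ! i \<inter> hs ! k \<and> hs ! i \<inter> hs ! k = hs ! j \<inter> hs ! k"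
proof -
  let ?ni = "\<phi> (hs ! i)" and ?nj = "\<phi> (hs ! j)" and ?nk = "\<phi> (hs ! k)"
  note hs = L1_chainD(1,2)[OF chain]
  have T: "hs ! i \<in> transversal" "hs ! j \<in> transversal" "hs ! k \<in> transversal"
    using hs(2) ijk nth_mem by (auto simp: transversal_def)
  have H_eq: "hs ! i = {x. ?ni \<bullet> x = 0}" "hs ! j = {x. ?nj \<bullet> x = 0}" "hs ! k = {x. ?nk \<bullet> x = 0}"
    using transversal_mem_iff[OF T(1)] transversal_mem_iff[OF T(2)] transversal_mem_iff[OF T(3)]
    by blast+
  have "hs ! i \<noteq> hs ! j" "hs ! j \<noteq> hs ! k" "hs ! i \<noteq> hs ! k"
    using nth_eq_iff_index_eq[OF hs(1)] ijk by auto
  then have ne: "?nj \<noteq> ?ni" "?nj \<noteq> ?nk" "?nk - ?ni \<noteq> 0"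
    using transversal_normal_inj T by auto
  have "c \<subseteq> {x. (?nj - ?ni) \<bullet> x \<ge> 0} \<inter> {x. (?nk - ?nj) \<bullet> x \<ge> 0}"
    using L1_chain_normal_order[OF chain] ijk c_subset_D
    by (force simp: inner_diff_left less_imp_le)
  then have "closure c \<subseteq> {x. (?nj - ?ni) \<bullet> x \<ge> 0} \<inter> {x. (?nk - ?nj) \<bullet> x \<ge> 0}"
    by (intro closure_minimal closed_Int closed_halfspace_ge)
  then have between: "0 \<le> (?nj - ?ni) \<bullet> x \<and> (?nj - ?ni) \<bullet> x \<le> (?nk - ?ni) \<bullet> x"
    if "x \<in> closure c" for x
    using that by (auto simp: inner_diff_left)
  obtain \<mu> where \<mu>: "?nj - ?ni = \<mu> *\<^sub>R (?nk - ?ni)"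
    using proportional_if_squeezed_on_slice[OF ne(3) between] incident
    unfolding incident_def ssum_transversal_eq[OF T(1,3)] by blast
  then have comb: "?nj = (1 - \<mu>) *\<^sub>R ?ni + \<mu> *\<^sub>R ?nk" by (simp add: algebra_simps)
  have "\<mu> \<noteq> 0" "\<mu> \<noteq> 1" using \<mu> ne(1,2) by auto
  then show ?thesis
    using hyperplane_intersections_eq_if_combination[OF comb] H_eq by simp
qed

end

theorem proposition4p5:
  fixes A :: "'a::euclidean_space set set" and l c :: "'a set"
  assumes "central_essential_arr A"
    and "modular_coatom A l"
    and "chamber A c"
    and "incident c l"
  shows "(\<exists>cs hs.
            distinct cs \<and> hd cs = c \<and>
            set cs = {c'. chamber A c' \<and> quot_chamber A l c' = quot_chamber A l c} \<and>
            distinct hs \<and> length cs = length hs + 1 \<and> set hs = A - loc A l \<and>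
            (\<forall>i < length cs. L1 A c (cs ! i) = set (take i hs)))
       \<and> (\<forall>cs hs.
            distinct cs \<and> hd cs = c \<and>
            set cs = {c'. chamber A c' \<and> quot_chamber A l c' = quot_chamber A l c} \<and>
            distinct hs \<and> length cs = length hs + 1 \<and> set hs = A - loc A l \<and>
            (\<forall>i < length cs. L1 A c (cs ! i) = set (take i hs))
          \<longrightarrow> (\<forall>i j k. i < j \<and> j < k \<and> k < length hs \<and>
                  incident c (ssum l (hs ! i \<inter> hs ! k)) \<longrightarrow>
                  hs ! i \<inter> hs ! j = hs ! i \<inter> hs ! k \<and> hs ! i \<inter> hs ! k = hs ! j \<inter> hs ! k))"
proof -
  have l: "subspace l" "dim l = 1"
    using assms(2) by (auto simp: modular_coatom_def coatom_def)
  obtain v where v: "v \<in> l" "v \<noteq> 0" "v \<in> closure c"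
    using incident_line_obtain_nonzero[OF l assms(4)] .
  obtain y0 where "y0 \<in> c"
    using assms(3) in_components_nonempty by (auto simp: chamber_def)
  interpret modular_line_arrangement A l c v y0
    using assms l v \<open>y0 \<in> c\<close>
    by unfold_locales (auto simp: central_essential_arr_def modular_coatom_def)
  show ?thesis
    unfolding L1_chain_def[symmetric] using L1_chain_exists L1_chain_intersections_eq by blast
qed

end
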